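(* Let $n\ge 1$ and $\gamma_1,\dots,\gamma_n>0$. For $i=1,\dots,n$ let $H_i$ be a system $\dot x_i=f_i(x_i,u_i)$, $y_i=h_i(x_i)$ ($x_i\in\mathbb{R}^{m_i}$, $u_i,y_i\in\mathbb{R}$) with a $C^1$ function $V_i$ satisfying $\nabla V_i(x_i)\cdot f_i(x_i,u_i)\le -h_i(x_i)^2+\gamma_iu_ih_i(x_i)$ for all $x_i,u_i$. Consider the cascade $u_1=u$ (external input $u\in\mathbb{R}$), $u_i=y_{i-1}$ for $i=2,\dots,n$, and write $y=(y_1,\dots,y_n)$. Then for every $$\delta>\gamma_1\cdots\gamma_n\cos\big(\pi/(n+1)\big)^{n+1}$$ there exist $d_1,\dots,d_n>0$ and $\epsilon>0$ such that $V=\sum_{i=1}^nd_iV_i$ satisfies, along the cascade dynamics and for all inputs $u$, $$\dot V\le-\epsilon|y|^2+\delta u^2+u\,y_n.$$ *)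

theory Defs
  imports "HOL-Analysis.Analysis"
begin

text \<open>The state space R^m of a subsystem is represented by real sequences
  vanishing from index m on (coordinates 0..m-1). The topology on nat => real
  is the product topology, which on this set is the Euclidean one.\<close>

definition Rspace :: "nat \<Rightarrow> (nat \<Rightarrow> real) set" where
  "Rspace m = {x. \<forall>j. m \<le> j \<longrightarrow> x j = 0}"

definition partial_deriv :: "((nat \<Rightarrow> real) \<Rightarrow> real) \<Rightarrow> (nat \<Rightarrow> real) \<Rightarrow> nat \<Rightarrow> real" where
  "partial_deriv V x j = deriv (\<lambda>t. V (x(j := t))) (x j)"

definition C1_on :: "nat \<Rightarrow> ((nat \<Rightarrow> real) \<Rightarrow> real) \<Rightarrow> bool" where
  "C1_on m V \<longleftrightarrow>
     (\<forall>x\<in>Rspace m. \<forall>j<m. (\<lambda>t. V (x(j := t))) differentiable (at (x j))) \<and>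
     (\<forall>j<m. continuous_on (Rspace m) (\<lambda>x. partial_deriv V x j))"

definition lie_deriv :: "nat \<Rightarrow> ((nat \<Rightarrow> real) \<Rightarrow> real) \<Rightarrow> (nat \<Rightarrow> real) \<Rightarrow> (nat \<Rightarrow> real) \<Rightarrow> real" where
  "lie_deriv m V x v = (\<Sum>j<m. partial_deriv V x j * v j)"

definition cascade_input :: "(nat \<Rightarrow> (nat \<Rightarrow> real) \<Rightarrow> real) \<Rightarrow> real \<Rightarrow> (nat \<Rightarrow> nat \<Rightarrow> real) \<Rightarrow> nat \<Rightarrow> real" where
  "cascade_input h u X i = (if i = 1 then u else h (i - 1) (X (i - 1)))"

end

theory Submission
  imports Defs
begin

text \<open>Rescale the outputs as \<open>w\<^sub>k = y\<^sub>k / t\<^sub>k\<close> with \<open>t\<^sub>k = a\<^sup>k \<gamma>\<^sub>1\<cdots>\<gamma>\<^sub>k\<close>, where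
  \<open>a\<close> is slightly larger than \<open>c = cos (\<pi>/(n+1))\<close>, and take \<open>d\<^sub>k = a t\<^sub>n / t\<^sub>k\<^sup>2\<close>. Then the
  weighted sum of the dissipation inequalities becomes
  \<open>t\<^sub>n (- a \<Sum>\<^sub>k\<^sub>\<ge>\<^sub>1 w\<^sub>k\<^sup>2 + \<Sum>\<^sub>k w\<^sub>k\<^sub>-\<^sub>1 w\<^sub>k)\<close> with \<open>w\<^sub>0 = u\<close>.
  The quadratic form \<open>\<Sum>\<^sub>k w\<^sub>k\<^sub>-\<^sub>1 w\<^sub>k - w\<^sub>n w\<^sub>0\<close> lives on a cycle of length \<open>n+1\<close> with one
  edge sign flipped; its largest eigenvalue is \<open>c\<close>. This bound is proved by induction along
  the path \<open>w\<^sub>0, \<dots>, w\<^sub>k\<close>, completing a square at each step by means of the addition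
  formula for \<open>sin ((k+1)\<theta>)\<close>, \<open>\<theta> = \<pi>/(n+1)\<close>. The surplus \<open>a - c\<close> yields \<open>\<epsilon>\<close>, and the
  \<open>w\<^sub>0\<^sup>2\<close> term costs \<open>c t\<^sub>n u\<^sup>2 \<le> a t\<^sub>n u\<^sup>2 < \<delta> u\<^sup>2\<close>.\<close>

text \<open>The invariant of the induction along the path \<open>w\<^sub>0, \<dots>, w\<^sub>k\<close>; for \<open>k = n\<close> and
  \<open>\<theta> = \<pi>/(n+1)\<close> it is \<open>2 sin \<theta>\<close> times the gap in the twisted cycle bound.\<close>

definition chain_form :: "real \<Rightarrow> (nat \<Rightarrow> real) \<Rightarrow> nat \<Rightarrow> real" where
  "chain_form \<theta> w k =
     sin ((real k - 1) * \<theta>) * ((w 0)\<^sup>2 + (w k)\<^sup>2) + 2 * sin \<theta> * w 0 * w k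
     + 2 * sin (real k * \<theta>) * (cos \<theta> * (\<Sum>j\<in>{1..<k}. (w j)\<^sup>2) - (\<Sum>j=1..k. w (j - 1) * w j))"

lemma chain_form_Suc:
  assumes "k \<ge> 1"
  shows "sin (real k * \<theta>) * chain_form \<theta> w (Suc k)
    = sin (real (Suc k) * \<theta>) * chain_form \<theta> w k
      + (sin (real (Suc k) * \<theta>) * w k - sin (real k * \<theta>) * w (Suc k) - sin \<theta> * w 0)\<^sup>2"
proof -
  have squares: "(\<Sum>j\<in>{1..<Suc k}. (w j)\<^sup>2) = (\<Sum>j\<in>{1..<k}. (w j)\<^sup>2) + (w k)\<^sup>2"
    using assms by (simp add: sum.atLeastLessThan_Suc)
  have products: "(\<Sum>j=1..Suc k. w (j - 1) * w j) = (\<Sum>j=1..k. w (j - 1) * w j) + w k * w (Suc k)"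
    by simp
  have sin_Suc: "sin (real (Suc k) * \<theta>) = sin (real k * \<theta>) * cos \<theta> + cos (real k * \<theta>) * sin \<theta>"
    by (simp add: distrib_right sin_add)
  have sin_pred: "sin ((real k - 1) * \<theta>) = sin (real k * \<theta>) * cos \<theta> - cos (real k * \<theta>) * sin \<theta>"
    by (simp add: left_diff_distrib sin_diff)
  have shift: "real (Suc k) - 1 = real k" by simp
  show ?thesis
    unfolding chain_form_def shift squares products sin_Suc sin_pred
    using sin_cos_squared_add[of "real k * \<theta>"] sin_cos_squared_add[of \<theta>]
    by algebra
qed

lemma chain_form_nonneg:
  assumes "0 < \<theta>" "1 \<le> k" "real k * \<theta> < pi"
  shows "chain_form \<theta> w k \<ge> 0"
  using assms(2,3)
proof (induction k rule: dec_induct)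
  case base
  show ?case by (simp add: chain_form_def)
next
  case (step k)
  have sin_pos: "sin (real j * \<theta>) > 0" if "1 \<le> j" "j \<le> Suc k" for j
  proof (rule sin_gt_zero)
    show "0 < real j * \<theta>" using that assms(1) by simp
    have "real j * \<theta> \<le> real (Suc k) * \<theta>" using that assms(1) by (intro mult_right_mono) auto
    then show "real j * \<theta> < pi" using step.prems by linarith
  qed
  have "real k * \<theta> < pi" using step.prems assms(1) by (simp add: distrib_right)
  then have "sin (real (Suc k) * \<theta>) * chain_form \<theta> w k \<ge> 0"
    using step.IH sin_pos[of "Suc k"] by simp
  then have "sin (real k * \<theta>) * chain_form \<theta> w (Suc k) \<ge> 0"
    unfolding chain_form_Suc[OF step.hyps(1)] by simp
  then show ?case using sin_pos[of k] step.hyps(1) by (simp add: zero_le_mult_iff)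
qed

lemma twisted_cycle_form_le:
  assumes "n \<ge> 1"
  shows "(\<Sum>j=1..n. w (j - 1) * w j) - w n * w 0 \<le> cos (pi / real (n + 1)) * (\<Sum>j=0..n. (w j)\<^sup>2)"
proof -
  define \<theta> where "\<theta> = pi / real (n + 1)"
  have \<theta>_pos: "0 < \<theta>" unfolding \<theta>_def by simp
  have sin_\<theta>_pos: "sin \<theta> > 0" unfolding \<theta>_def using assms by (intro sin_gt_zero) (auto simp: field_simps)
  have n_\<theta>: "real n * \<theta> = pi - \<theta>" unfolding \<theta>_def by (simp add: field_simps)
  have pred_n_\<theta>: "(real n - 1) * \<theta> = pi - 2 * \<theta>" unfolding \<theta>_def by (simp add: field_simps)
  have squares: "(\<Sum>j=0..n. (w j)\<^sup>2) = (w 0)\<^sup>2 + (\<Sum>j\<in>{1..<n}. (w j)\<^sup>2) + (w n)\<^sup>2"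
  proof -
    have "{0..n} = insert 0 (insert n {1..<n})" using assms by auto
    then show ?thesis using assms by simp
  qed
  have "chain_form \<theta> w n \<ge> 0"
    using assms \<theta>_pos n_\<theta> by (intro chain_form_nonneg) auto
  also have "chain_form \<theta> w n
    = 2 * sin \<theta> * (cos \<theta> * (\<Sum>j=0..n. (w j)\<^sup>2) - ((\<Sum>j=1..n. w (j - 1) * w j) - w n * w 0))"
    unfolding chain_form_def n_\<theta> pred_n_\<theta> squares sin_pi_minus sin_double
    by (simp add: algebra_simps)
  finally show ?thesis
    using sin_\<theta>_pos unfolding \<theta>_def by (simp add: zero_le_mult_iff)
qed

definition cascade_scale :: "real \<Rightarrow> (nat \<Rightarrow> real) \<Rightarrow> nat \<Rightarrow> real" where
  "cascade_scale a \<gamma> k = a ^ k * (\<Prod>i=1..k. \<gamma> i)"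

lemma cascade_scale_0 [simp]: "cascade_scale a \<gamma> 0 = 1"
  by (simp add: cascade_scale_def)

lemma cascade_scale_Suc: "cascade_scale a \<gamma> (Suc k) = a * \<gamma> (Suc k) * cascade_scale a \<gamma> k"
  by (simp add: cascade_scale_def prod.cl_ivl_Suc)

lemma cascade_scale_pos:
  assumes "a > 0" "\<forall>i\<in>{1..n}. \<gamma> i > 0" "k \<le> n"
  shows "cascade_scale a \<gamma> k > 0"
  unfolding cascade_scale_def using assms by (intro mult_pos_pos prod_pos zero_less_power) auto

lemma weighted_supply_rate_le:
  fixes a :: real and n :: nat and \<gamma> y :: "nat \<Rightarrow> real"
  defines "t \<equiv> cascade_scale a \<gamma>" and "c \<equiv> cos (pi / real (n + 1))"
  assumes "n \<ge> 1" "a > 0" "\<forall>i\<in>{1..n}. \<gamma> i > 0"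
  shows "(\<Sum>i=1..n. a * t n / (t i)\<^sup>2 * (- (y i)\<^sup>2 + \<gamma> i * y (i - 1) * y i))
    \<le> - t n * (a - c) * (\<Sum>i=1..n. (y i / t i)\<^sup>2) + t n * c * (y 0)\<^sup>2 + y 0 * y n"
proof -
  define w where "w i = y i / t i" for i
  have t_pos: "t k > 0" if "k \<le> n" for k
    unfolding t_def using assms(4,5) that by (rule cascade_scale_pos)
  have term_eq: "a * t n / (t i)\<^sup>2 * (- (y i)\<^sup>2 + \<gamma> i * y (i - 1) * y i)
      = t n * (- a * (w i)\<^sup>2 + w (i - 1) * w i)" if i_range: "i \<in> {1..n}" for i
  proof -
    obtain j where i: "i = Suc j" using i_range by (cases i) auto
    have "t j > 0" "t (Suc j) > 0" "\<gamma> (Suc j) > 0" using t_pos assms(5) i_range i by auto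
    then show ?thesis
      unfolding w_def i t_def cascade_scale_Suc using assms(4)
      by (simp add: field_simps power2_eq_square)
  qed
  have "(\<Sum>i=1..n. a * t n / (t i)\<^sup>2 * (- (y i)\<^sup>2 + \<gamma> i * y (i - 1) * y i))
      = (\<Sum>i=1..n. t n * (- a * (w i)\<^sup>2 + w (i - 1) * w i))"
    using term_eq by (rule sum.cong[OF refl])
  also have "\<dots> = t n * (- a * (\<Sum>i=1..n. (w i)\<^sup>2) + (\<Sum>i=1..n. w (i - 1) * w i))"
    by (simp only: sum.distrib flip: sum_distrib_left)
  also have "\<dots> \<le> t n * (- a * (\<Sum>i=1..n. (w i)\<^sup>2) + (c * ((w 0)\<^sup>2 + (\<Sum>i=1..n. (w i)\<^sup>2)) + w n * w 0))"
  proof -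
    have "(\<Sum>i=1..n. w (i - 1) * w i) \<le> c * ((w 0)\<^sup>2 + (\<Sum>i=1..n. (w i)\<^sup>2)) + w n * w 0"
      using twisted_cycle_form_le[OF assms(3), of w] by (simp add: c_def sum.atLeast_Suc_atMost)
    then show ?thesis using t_pos[of n] by (intro mult_left_mono) auto
  qed
  also have "\<dots> = - t n * (a - c) * (\<Sum>i=1..n. (w i)\<^sup>2) + t n * c * (y 0)\<^sup>2 + y 0 * y n"
  proof -
    have "w 0 = y 0" "y n = t n * w n" using t_pos[of n] unfolding w_def t_def by simp_all
    then show ?thesis by (simp add: algebra_simps)
  qed
  finally show ?thesis unfolding w_def .
qed

lemma exists_gt_power_less:
  fixes c P \<delta> :: real
  assumes "P * c ^ N < \<delta>"
  shows "\<exists>a>c. P * a ^ N < \<delta>"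
proof -
  have "((\<lambda>a. P * a ^ N) \<longlongrightarrow> P * c ^ N) (at_right c)"
    by (intro tendsto_intros)
  then have "\<forall>\<^sub>F a in at_right c. P * a ^ N < \<delta>"
    using assms by (rule order_tendstoD(2))
  with eventually_at_right_less have "\<forall>\<^sub>F a in at_right c. c < a \<and> P * a ^ N < \<delta>"
    by (rule eventually_conj)
  then show ?thesis
    using eventually_happens'[OF trivial_limit_at_right_real] by blast
qed

lemma cascade_supply_rate_bound:
  fixes \<gamma> :: "nat \<Rightarrow> real" and \<delta> :: real
  assumes n_ge_1: "n \<ge> 1" and \<gamma>_pos: "\<forall>i\<in>{1..n}. \<gamma> i > 0"
    and \<delta>_gt: "\<delta> > (\<Prod>i=1..n. \<gamma> i) * cos (pi / real (n + 1)) ^ (n + 1)"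
  shows "\<exists>d. (\<forall>i\<in>{1..n}. d i > 0) \<and> (\<exists>\<epsilon>>0. \<forall>y::nat \<Rightarrow> real.
    (\<Sum>i=1..n. d i * (- (y i)\<^sup>2 + \<gamma> i * y (i - 1) * y i))
      \<le> - \<epsilon> * (\<Sum>i=1..n. (y i)\<^sup>2) + \<delta> * (y 0)\<^sup>2 + y 0 * y n)"
proof -
  define c where "c = cos (pi / real (n + 1))"
  have c_nonneg: "c \<ge> 0" unfolding c_def using n_ge_1 by (intro cos_ge_zero) (auto simp: field_simps)
  obtain a where "a > c" and a_bound: "(\<Prod>i=1..n. \<gamma> i) * a ^ (n + 1) < \<delta>"
    using exists_gt_power_less[OF \<delta>_gt] unfolding c_def by blast
  with c_nonneg have a_pos: "a > 0" by linarith
  define t where "t = cascade_scale a \<gamma>"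
  define T where "T = (\<Sum>k=1..n. (t k)\<^sup>2)"
  define \<epsilon> where "\<epsilon> = t n * (a - c) / T"
  have t_pos: "t k > 0" if "k \<le> n" for k
    unfolding t_def using a_pos \<gamma>_pos that by (rule cascade_scale_pos)
  have t_le_T: "(t i)\<^sup>2 \<le> T" if "i \<in> {1..n}" for i
    unfolding T_def using that by (intro member_le_sum) auto
  have "0 < (t 1)\<^sup>2" using t_pos[of 1] n_ge_1 by simp
  also have "\<dots> \<le> T" using t_le_T[of 1] n_ge_1 by simp
  finally have "T > 0" .
  then have "\<epsilon> > 0" unfolding \<epsilon>_def using t_pos[of n] \<open>a > c\<close> by simp
  have "t n * c \<le> \<delta>"
  proof -
    have "t n * c \<le> t n * a" using t_pos[of n] \<open>a > c\<close> by simp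
    also have "\<dots> = (\<Prod>i=1..n. \<gamma> i) * a ^ (n + 1)" unfolding t_def cascade_scale_def by simp
    finally show ?thesis using a_bound by linarith
  qed
  have "(\<Sum>i=1..n. a * t n / (t i)\<^sup>2 * (- (y i)\<^sup>2 + \<gamma> i * y (i - 1) * y i))
      \<le> - \<epsilon> * (\<Sum>i=1..n. (y i)\<^sup>2) + \<delta> * (y 0)\<^sup>2 + y 0 * y n" for y
  proof -
    have "\<epsilon> * (\<Sum>i=1..n. (y i)\<^sup>2) \<le> \<epsilon> * (\<Sum>i=1..n. T * (y i / t i)\<^sup>2)"
    proof (intro mult_left_mono sum_mono)
      fix i assume i: "i \<in> {1..n}"
      then have "(y i)\<^sup>2 = (t i)\<^sup>2 * (y i / t i)\<^sup>2"
        using t_pos[of i] by (simp add: power_divide)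
      also have "\<dots> \<le> T * (y i / t i)\<^sup>2"
        using t_le_T[OF i] by (rule mult_right_mono) simp
      finally show "(y i)\<^sup>2 \<le> T * (y i / t i)\<^sup>2" .
    qed (use \<open>\<epsilon> > 0\<close> in simp)
    also have "\<dots> = t n * (a - c) * (\<Sum>i=1..n. (y i / t i)\<^sup>2)"
      unfolding \<epsilon>_def using \<open>T > 0\<close> by (simp add: sum_distrib_left mult.assoc)
    finally have "\<epsilon> * (\<Sum>i=1..n. (y i)\<^sup>2) \<le> t n * (a - c) * (\<Sum>i=1..n. (y i / t i)\<^sup>2)" .
    moreover have "t n * c * (y 0)\<^sup>2 \<le> \<delta> * (y 0)\<^sup>2"
      using \<open>t n * c \<le> \<delta>\<close> by (rule mult_right_mono) simp
    ultimately show ?thesis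
      using weighted_supply_rate_le[OF n_ge_1 a_pos \<gamma>_pos, of y] unfolding t_def c_def by linarith
  qed
  moreover have "a * t n / (t i)\<^sup>2 > 0" if "i \<in> {1..n}" for i
    using that a_pos t_pos[of i] t_pos[of n] by simp
  ultimately show ?thesis
    using \<open>\<epsilon> > 0\<close> by (intro exI[of _ "\<lambda>i. a * t n / (t i)\<^sup>2"]) blast
qed

lemma cascade_lie_deriv_sum_le:
  fixes u :: real and X :: "nat \<Rightarrow> nat \<Rightarrow> real" and h :: "nat \<Rightarrow> (nat \<Rightarrow> real) \<Rightarrow> real"
  defines "y \<equiv> \<lambda>k. if k = 0 then u else h k (X k)"
  assumes d_nonneg: "\<forall>i\<in>{1..n}. d i \<ge> 0"
    and dissipation: "\<forall>i\<in>{1..n}. \<forall>x\<in>Rspace (m i). \<forall>w::real.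
           lie_deriv (m i) (V i) x (f i x w) \<le> - (h i x)\<^sup>2 + \<gamma> i * w * h i x"
    and X: "\<forall>i\<in>{1..n}. X i \<in> Rspace (m i)"
  shows "(\<Sum>i=1..n. d i * lie_deriv (m i) (V i) (X i) (f i (X i) (cascade_input h u X i)))
    \<le> (\<Sum>i=1..n. d i * (- (y i)\<^sup>2 + \<gamma> i * y (i - 1) * y i))"
proof (rule sum_mono)
  fix i assume i: "i \<in> {1..n}"
  have "lie_deriv (m i) (V i) (X i) (f i (X i) (cascade_input h u X i))
      \<le> - (h i (X i))\<^sup>2 + \<gamma> i * cascade_input h u X i * h i (X i)"
    using dissipation X i by blast
  also have "\<dots> = - (y i)\<^sup>2 + \<gamma> i * y (i - 1) * y i"
    using i unfolding cascade_input_def y_def by auto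
  finally show "d i * lie_deriv (m i) (V i) (X i) (f i (X i) (cascade_input h u X i))
      \<le> d i * (- (y i)\<^sup>2 + \<gamma> i * y (i - 1) * y i)"
    using d_nonneg i by (intro mult_left_mono) auto
qed

theorem corollary3:
  fixes n :: nat and m :: "nat \<Rightarrow> nat" and \<gamma> :: "nat \<Rightarrow> real"
    and f :: "nat \<Rightarrow> (nat \<Rightarrow> real) \<Rightarrow> real \<Rightarrow> (nat \<Rightarrow> real)"
    and h :: "nat \<Rightarrow> (nat \<Rightarrow> real) \<Rightarrow> real"
    and V :: "nat \<Rightarrow> (nat \<Rightarrow> real) \<Rightarrow> real"
    and \<delta> :: real
  assumes "n \<ge> 1"
    and "\<forall>i\<in>{1..n}. \<gamma> i > 0"
    and "\<forall>i\<in>{1..n}. C1_on (m i) (V i)"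
    and "\<forall>i\<in>{1..n}. \<forall>x\<in>Rspace (m i). \<forall>w::real.
           lie_deriv (m i) (V i) x (f i x w) \<le> - (h i x)\<^sup>2 + \<gamma> i * w * h i x"
    and "\<delta> > (\<Prod>i=1..n. \<gamma> i) * cos (pi / real (n + 1)) ^ (n + 1)"
  shows "\<exists>d::nat \<Rightarrow> real. (\<forall>i\<in>{1..n}. d i > 0) \<and> (\<exists>\<epsilon>>0.
           \<forall>(X::nat \<Rightarrow> nat \<Rightarrow> real) (u::real). (\<forall>i\<in>{1..n}. X i \<in> Rspace (m i)) \<longrightarrow>
             (\<Sum>i=1..n. d i * lie_deriv (m i) (V i) (X i) (f i (X i) (cascade_input h u X i)))
               \<le> - \<epsilon> * (\<Sum>i=1..n. (h i (X i))\<^sup>2) + \<delta> * u\<^sup>2 + u * h n (X n))"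
proof -
  obtain d \<epsilon> where d_pos: "\<forall>i\<in>{1..n}. d i > 0" and "\<epsilon> > 0"
    and rate: "\<And>y. (\<Sum>i=1..n. d i * (- (y i)\<^sup>2 + \<gamma> i * y (i - 1) * y i))
                 \<le> - \<epsilon> * (\<Sum>i=1..n. (y i)\<^sup>2) + \<delta> * (y 0)\<^sup>2 + y 0 * y n"
    using cascade_supply_rate_bound[OF assms(1,2,5)] by blast
  have "(\<Sum>i=1..n. d i * lie_deriv (m i) (V i) (X i) (f i (X i) (cascade_input h u X i)))
          \<le> - \<epsilon> * (\<Sum>i=1..n. (h i (X i))\<^sup>2) + \<delta> * u\<^sup>2 + u * h n (X n)"
    if "\<forall>i\<in>{1..n}. X i \<in> Rspace (m i)" for X u
  proof -
    let ?y = "\<lambda>k. if k = 0 then u else h k (X k)"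
    have "(\<Sum>i=1..n. d i * lie_deriv (m i) (V i) (X i) (f i (X i) (cascade_input h u X i)))
        \<le> (\<Sum>i=1..n. d i * (- (?y i)\<^sup>2 + \<gamma> i * ?y (i - 1) * ?y i))"
      using d_pos assms(4) that by (intro cascade_lie_deriv_sum_le) auto
    also have "\<dots> \<le> - \<epsilon> * (\<Sum>i=1..n. (?y i)\<^sup>2) + \<delta> * (?y 0)\<^sup>2 + ?y 0 * ?y n"
      by (rule rate)
    also have "\<dots> = - \<epsilon> * (\<Sum>i=1..n. (h i (X i))\<^sup>2) + \<delta> * u\<^sup>2 + u * h n (X n)"
      using assms(1) by simp
    finally show ?thesis .
  qed
  with d_pos \<open>\<epsilon> > 0\<close> show ?thesis by blast
qed

end
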